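(* Let $h\in\mathbb{N}$, $b>0$ and $m>hb$. Suppose $\nu$ is a $b$-balanced product probability measure on $[m]^n$ and $\mathcal{F}_1,\dots,\mathcal{F}_h\subset[m]^n$ satisfy $\prod_{j=1}^h\nu(\mathcal{F}_j)>2^hb/(m-hb)$. Then $\mathcal{F}_1,\dots,\mathcal{F}_h$ cross contain an $h$-matching, i.e. there are $x^j\in\mathcal{F}_j$ ($j\in[h]$) such that for all distinct $j,j'\in[h]$ there is no $i\in[n]$ with $x^j_i=x^{j'}_i$.
   Context: A product measure $\nu=\prod_{i=1}^n\nu_i$ on $[m]^n$ is $b$-balanced if $\nu_i(x)\le b/m$ for all $i\in[n]$ and $x\in[m]$. *)

theory Defs
  imports Complex_Main "HOL-Library.FuncSet"
begin

definition cube :: "nat \<Rightarrow> nat \<Rightarrow> (nat \<Rightarrow> nat) set" where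
  "cube n m = PiE {1..n} (\<lambda>_. {1..m})"

text \<open>A product probability measure on [m]^n, given by its marginals nu i (i in [n]),
  each a probability distribution on [m].\<close>
definition product_prob :: "nat \<Rightarrow> nat \<Rightarrow> (nat \<Rightarrow> nat \<Rightarrow> real) \<Rightarrow> bool" where
  "product_prob n m nu \<longleftrightarrow>
     (\<forall>i\<in>{1..n}. (\<forall>x\<in>{1..m}. 0 \<le> nu i x) \<and> (\<Sum>x\<in>{1..m}. nu i x) = 1)"

definition prod_measure :: "nat \<Rightarrow> (nat \<Rightarrow> nat \<Rightarrow> real) \<Rightarrow> (nat \<Rightarrow> nat) set \<Rightarrow> real" where
  "prod_measure n nu F = (\<Sum>x\<in>F. \<Prod>i\<in>{1..n}. nu i (x i))"

definition balanced :: "nat \<Rightarrow> nat \<Rightarrow> (nat \<Rightarrow> nat \<Rightarrow> real) \<Rightarrow> real \<Rightarrow> bool" where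
  "balanced n m nu b \<longleftrightarrow> (\<forall>i\<in>{1..n}. \<forall>x\<in>{1..m}. nu i x \<le> b / real m)"

end

theory Submission
  imports Defs
begin

(* Induction on the dimension, splitting off the last coordinate. With p = nu_n, beta = b/m and
   f_j(a) the measure of the slice of F_j at x_n = a, the hypothesis reads
   prod_j E_p f_j > eps = 2^h beta / (1 - h beta). It suffices to find distinct a_1, ..., a_h with
   prod_j f_j(a_j) > eps: the slices at the a_j then satisfy the hypothesis in dimension n - 1,
   and a matching of these slices, extended by the distinct last coordinates a_j, is a matching.

   For this one-coordinate step let v_j1 >= ... >= v_jh be the h largest values of f_j. As
   p <= beta, E_p f_j <= v_jh + beta * sum_k (v_jk - v_jh), and together with E_p f_j > 2^h beta
   this forces (E_p f_j)^h <= prod_k v_jk. Hence prod_j prod_k v_jk > eps^h. The h^2 entries split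
   into h cyclic diagonals k = sigma_s(j), so one diagonal has product > eps. Serving the rows
   greedily in the order of sigma_s(j), the row with sigma_s(j) = r finds among the points of its
   r largest values one that the r - 1 rows before it have not taken. *)

lemma double_le_power_two: "2 * h \<le> (2::nat) ^ h"
proof (cases h)
  case (Suc k)
  have "Suc k \<le> 2 ^ k" using less_exp[of k] by (simp only: Suc_le_eq)
  then show ?thesis using Suc by simp
qed simp

lemma square_le_power_two_plus: "h * h \<le> (2::nat) ^ h + h"
proof (induction h)
  case (Suc h)
  then show ?case using double_le_power_two[of h] by simp
qed simp

lemma prod_add_ge_power_plus_sum:
  fixes d :: "'a \<Rightarrow> real"
  assumes "finite K" "0 \<le> y" "\<forall>k\<in>K. 0 \<le> d k"
  shows "y ^ card K + y ^ (card K - 1) * sum d K \<le> (\<Prod>k\<in>K. y + d k)"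
  using assms
proof (induction K rule: finite_induct)
  case (insert x K)
  define c where "c = card K"
  have IH: "y ^ c + y ^ (c - 1) * sum d K \<le> (\<Prod>k\<in>K. y + d k)"
    using insert by (simp add: c_def)
  have "0 \<le> y ^ (c - 1) * sum d K"
    using insert.prems by (intro mult_nonneg_nonneg sum_nonneg) auto
  then have ge_power: "y ^ c \<le> (\<Prod>k\<in>K. y + d k)"
    using IH by linarith
  have "y ^ Suc c + y ^ c * (d x + sum d K) = y * (y ^ c + y ^ (c - 1) * sum d K) + d x * y ^ c"
  proof (cases c)
    case 0
    then have "K = {}" using insert.hyps c_def by simp
    then show ?thesis by simp
  qed (simp add: algebra_simps)
  also have "\<dots> \<le> y * (\<Prod>k\<in>K. y + d k) + d x * (\<Prod>k\<in>K. y + d k)"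
    using IH ge_power insert.prems by (intro add_mono mult_left_mono) auto
  also have "\<dots> = (\<Prod>k\<in>insert x K. y + d k)"
    using insert.hyps by (simp add: algebra_simps)
  finally show ?case using insert.hyps by (simp add: c_def)
qed simp

lemma power_diff_le_mult_diff:
  fixes a y :: "'a::linordered_idom"
  assumes "0 \<le> y" "y \<le> a"
  shows "a ^ n - y ^ n \<le> of_nat n * a ^ (n - 1) * (a - y)"
proof -
  have "a ^ n - y ^ n = (a - y) * (\<Sum>i<n. y ^ (n - Suc i) * a ^ i)"
    by (rule power_diff_sumr2)
  also have "\<dots> \<le> (a - y) * (\<Sum>i<n. a ^ (n - 1))"
  proof (intro mult_left_mono sum_mono)
    fix i assume "i \<in> {..<n}"
    then have "a ^ (n - Suc i) * a ^ i = a ^ (n - 1)"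
      by (simp flip: power_add)
    moreover have "y ^ (n - Suc i) * a ^ i \<le> a ^ (n - Suc i) * a ^ i"
      using assms by (intro mult_right_mono power_mono) auto
    ultimately show "y ^ (n - Suc i) * a ^ i \<le> a ^ (n - 1)" by simp
  qed (use assms in simp)
  finally show ?thesis by (simp add: mult_ac)
qed

lemma one_plus_inverse_power_le_3: "(1 + 1 / real k) ^ k \<le> 3"
proof -
  have "(1 + 1 / real k) ^ k \<le> exp (1 / real k) ^ k"
    using exp_ge_add_one_self[of "1 / real k"] by (intro power_mono) auto
  also have "\<dots> = exp (real k * (1 / real k))"
    by (simp flip: exp_of_nat_mult)
  also have "\<dots> \<le> exp 1"
    by simp
  finally show ?thesis using exp_le by linarith
qed

lemma add_mult_power_le:
  fixes y \<beta> D :: real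
  assumes "0 \<le> y" "0 \<le> D" "D \<le> real h - 1" "0 \<le> \<beta>" "3 * real h * \<beta> \<le> 1"
    and "(real h - 1)\<^sup>2 * \<beta> \<le> y"
  shows "(y + \<beta> * D) ^ h \<le> y ^ h + y ^ (h - 1) * D"
proof (cases "h \<le> 1")
  case True
  then have "h = 1" "D = 0" using assms(2,3) by auto
  then show ?thesis by simp
next
  case False
  define a where "a = y + \<beta> * D"
  have "y \<le> a" using assms by (simp add: a_def)
  have "(real h - 1) * (\<beta> * D) \<le> (real h - 1) * (\<beta> * (real h - 1))"
    using assms False by (intro mult_left_mono) auto
  also have "\<dots> \<le> y" using assms(6) by (simp add: power2_eq_square mult_ac)
  finally have "(real h - 1) * a \<le> real h * y" by (simp add: a_def algebra_simps)
  then have "a \<le> y * (1 + 1 / real (h - 1))"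
    using False by (simp add: field_simps)
  then have "a ^ (h - 1) \<le> y ^ (h - 1) * (1 + 1 / real (h - 1)) ^ (h - 1)"
    using \<open>y \<le> a\<close> assms(1) by (simp add: power_mono flip: power_mult_distrib)
  also have "\<dots> \<le> y ^ (h - 1) * 3"
    using one_plus_inverse_power_le_3 assms(1) by (intro mult_left_mono) auto
  finally have a_power: "a ^ (h - 1) \<le> 3 * y ^ (h - 1)" by simp
  have "a ^ h - y ^ h \<le> real h * a ^ (h - 1) * (\<beta> * D)"
    using power_diff_le_mult_diff[OF assms(1) \<open>y \<le> a\<close>, of h] by (simp add: a_def)
  also have "\<dots> \<le> real h * (3 * y ^ (h - 1)) * (\<beta> * D)"
    using a_power assms by (intro mult_right_mono mult_left_mono) auto
  also have "\<dots> = (3 * real h * \<beta>) * (y ^ (h - 1) * D)" by simp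
  also have "\<dots> \<le> y ^ (h - 1) * D"
    using assms by (intro mult_left_le_one_le) auto
  finally show ?thesis by (simp add: a_def)
qed

section \<open>Choosing distinct points in one coordinate\<close>

lemma sum_weighted_le_threshold_plus_excess:
  fixes p f :: "'a \<Rightarrow> real"
  assumes "finite A" "S \<subseteq> A" "\<forall>a\<in>A. 0 \<le> p a \<and> p a \<le> \<beta>" "sum p A = 1"
    and "\<forall>a\<in>S. y \<le> f a" "\<forall>a\<in>A - S. f a \<le> y"
  shows "(\<Sum>a\<in>A. p a * f a) \<le> y + \<beta> * (\<Sum>a\<in>S. f a - y)"
proof -
  have "(\<Sum>a\<in>A. p a * f a) = y + (\<Sum>a\<in>A. p a * (f a - y))"
    using assms(4) by (simp add: right_diff_distrib sum_subtractf flip: sum_distrib_right)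
  also have "(\<Sum>a\<in>A. p a * (f a - y)) = (\<Sum>a\<in>A - S. p a * (f a - y)) + (\<Sum>a\<in>S. p a * (f a - y))"
    using assms(1,2) by (simp add: sum.subset_diff)
  also have "(\<Sum>a\<in>A - S. p a * (f a - y)) \<le> 0"
    using assms(3,6) by (intro sum_nonpos mult_nonneg_nonpos) auto
  also have "(\<Sum>a\<in>S. p a * (f a - y)) \<le> (\<Sum>a\<in>S. \<beta> * (f a - y))"
    using assms(2,3,5) by (intro sum_mono mult_right_mono) auto
  finally show ?thesis by (simp add: sum_distrib_left)
qed

lemma exists_top_elements:
  fixes g :: "'a \<Rightarrow> real"
  assumes "finite A" "h \<le> card A" "1 \<le> h"
  shows "\<exists>t. t ` {1..h} \<subseteq> A \<and> inj_on t {1..h}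
           \<and> (\<forall>k\<in>{1..h}. \<forall>k'\<in>{1..h}. k \<le> k' \<longrightarrow> g (t k') \<le> g (t k))
           \<and> (\<forall>a\<in>A - t ` {1..h}. g a \<le> g (t h))"
proof -
  obtain xs where xs: "set xs = A" "distinct xs"
    using finite_distinct_list[OF assms(1)] by blast
  define L where "L = sort_key (\<lambda>a. - g a) xs"
  have L: "set L = A" "distinct L" "length L = card A"
    using xs by (simp_all add: L_def distinct_card[symmetric])
  have antimono: "g (L ! j) \<le> g (L ! i)" if "i \<le> j" "j < length L" for i j
  proof -
    have "sorted (map (\<lambda>a. - g a) L)" unfolding L_def by (rule sorted_sort_key)
    then have "(map (\<lambda>a. - g a) L) ! i \<le> (map (\<lambda>a. - g a) L) ! j"
      using that by (intro sorted_nth_mono) auto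
    then show ?thesis using that by simp
  qed
  define t where "t k = L ! (k - 1)" for k
  show ?thesis
  proof (intro exI conjI ballI impI)
    show "t ` {1..h} \<subseteq> A" using assms L by (auto simp: t_def)
    show "inj_on t {1..h}"
      using assms L by (auto simp: inj_on_def t_def nth_eq_iff_index_eq)
  next
    fix k k' assume "k \<in> {1..h}" "k' \<in> {1..h}" "k \<le> k'"
    then show "g (t k') \<le> g (t k)" using assms L by (auto simp: t_def intro!: antimono)
  next
    fix a assume a: "a \<in> A - t ` {1..h}"
    then obtain i where i: "i < length L" "L ! i = a" using L by (metis DiffD1 in_set_conv_nth)
    have "h \<le> i"
    proof (rule ccontr)
      assume "\<not> h \<le> i"
      then have "t (Suc i) = a" "Suc i \<in> {1..h}" using i by (auto simp: t_def)
      then show False using a by auto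
    qed
    then show "g a \<le> g (t h)" using i assms by (auto simp: t_def intro!: antimono)
  qed
qed

lemma power_le_prod_of_bounded_excess:
  fixes v :: "nat \<Rightarrow> real"
  assumes "1 \<le> h" "0 < \<beta>" "3 * real h * \<beta> \<le> 1"
    and v: "\<forall>k\<in>{1..h}. v h \<le> v k \<and> v k \<le> 1" "0 \<le> v h"
    and e: "e \<le> v h + \<beta> * (\<Sum>k\<in>{1..h}. v k - v h)" "2 ^ h * \<beta> < e"
  shows "e ^ h \<le> (\<Prod>k\<in>{1..h}. v k)"
proof -
  define D where "D = (\<Sum>k\<in>{1..h}. v k - v h)"
  have "0 \<le> D" unfolding D_def using v(1) by (intro sum_nonneg) auto
  have "D = (\<Sum>k\<in>{1..h} - {h}. v k - v h)"
    using sum.remove[of "{1..h}" h "\<lambda>k. v k - v h"] assms(1) by (simp add: D_def)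
  also have "\<dots> \<le> (\<Sum>k\<in>{1..h} - {h}. 1)"
    using v by (intro sum_mono) fastforce
  finally have "D \<le> real h - 1" using assms(1) by simp
  have "real (h * h) \<le> real (2 ^ h + h)"
    using square_le_power_two_plus of_nat_le_iff by blast
  then have "(real h - 1)\<^sup>2 \<le> 2 ^ h - (real h - 1)"
    by (simp add: power2_eq_square algebra_simps)
  then have "(real h - 1)\<^sup>2 * \<beta> \<le> (2 ^ h - (real h - 1)) * \<beta>"
    using assms(2) by (intro mult_right_mono) auto
  also have "\<dots> \<le> v h"
    using e mult_left_mono[OF \<open>D \<le> real h - 1\<close>, of \<beta>] assms(2)
    by (simp add: D_def algebra_simps)
  finally have "(real h - 1)\<^sup>2 * \<beta> \<le> v h" .
  have "0 < 2 ^ h * \<beta>" using assms(2) by simp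
  then have "e ^ h \<le> (v h + \<beta> * D) ^ h"
    using e by (intro power_mono) (simp_all add: D_def)
  also have "\<dots> \<le> v h ^ h + v h ^ (h - 1) * D"
    using \<open>0 \<le> D\<close> \<open>D \<le> real h - 1\<close> \<open>(real h - 1)\<^sup>2 * \<beta> \<le> v h\<close> assms(2,3) v(2)
    by (intro add_mult_power_le) auto
  also have "\<dots> \<le> (\<Prod>k\<in>{1..h}. v h + (v k - v h))"
    using prod_add_ge_power_plus_sum[of "{1..h}" "v h" "\<lambda>k. v k - v h"] v
    by (simp add: D_def)
  finally show ?thesis by simp
qed

lemma exists_top_elements_power_le_prod:
  fixes p f :: "'a \<Rightarrow> real"
  assumes A: "finite A" "h \<le> card A" "1 \<le> h"
    and \<beta>: "0 < \<beta>" "3 * real h * \<beta> \<le> 1"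
    and p: "\<forall>a\<in>A. 0 \<le> p a \<and> p a \<le> \<beta>" "sum p A = 1"
    and f: "\<forall>a\<in>A. 0 \<le> f a \<and> f a \<le> 1"
    and large: "2 ^ h * \<beta> < (\<Sum>a\<in>A. p a * f a)"
  shows "\<exists>t. t ` {1..h} \<subseteq> A \<and> inj_on t {1..h}
           \<and> (\<forall>k\<in>{1..h}. \<forall>k'\<in>{1..h}. k \<le> k' \<longrightarrow> f (t k') \<le> f (t k))
           \<and> (\<Sum>a\<in>A. p a * f a) ^ h \<le> (\<Prod>k\<in>{1..h}. f (t k))"
proof -
  obtain t where t_A: "t ` {1..h} \<subseteq> A" and t_inj: "inj_on t {1..h}"
    and t_antimono: "\<forall>k\<in>{1..h}. \<forall>k'\<in>{1..h}. k \<le> k' \<longrightarrow> f (t k') \<le> f (t k)"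
    and t_top: "\<forall>a\<in>A - t ` {1..h}. f a \<le> f (t h)"
    using exists_top_elements[OF A] by blast
  have t_in: "t k \<in> A" if "k \<in> {1..h}" for k
    using t_A that by blast
  have t_h_le: "\<forall>k\<in>{1..h}. f (t h) \<le> f (t k) \<and> f (t k) \<le> 1"
    using t_antimono A(3) f t_in by auto
  have "(\<Sum>a\<in>A. p a * f a) \<le> f (t h) + \<beta> * (\<Sum>a\<in>t ` {1..h}. f a - f (t h))"
    using t_h_le t_top by (intro sum_weighted_le_threshold_plus_excess[OF A(1) t_A p]) auto
  then have "(\<Sum>a\<in>A. p a * f a) \<le> f (t h) + \<beta> * (\<Sum>k\<in>{1..h}. f (t k) - f (t h))"
    using sum.reindex[OF t_inj, of "\<lambda>a. f a - f (t h)"] by simp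
  moreover have "0 \<le> f (t h)" using f t_in A(3) by simp
  ultimately have "(\<Sum>a\<in>A. p a * f a) ^ h \<le> (\<Prod>k\<in>{1..h}. f (t k))"
    using power_le_prod_of_bounded_excess[OF A(3) \<beta>, of "\<lambda>k. f (t k)"] t_h_le large by simp
  then show ?thesis using t_A t_inj t_antimono by blast
qed

lemma exists_inj_on_choice:
  fixes r :: "'a \<Rightarrow> nat" and C :: "'a \<Rightarrow> 'b set"
  assumes "finite J" "inj_on r J" "\<forall>j\<in>J. 0 < r j \<and> r j \<le> card (C j)"
  shows "\<exists>a. inj_on a J \<and> (\<forall>j\<in>J. a j \<in> C j)"
  using assms
proof (induction J rule: finite_ranking_induct[where f = r])
  case (insert x J)
  show ?case
  proof (cases "x \<in> J")
    case True
    then show ?thesis using insert by (simp add: insert_absorb)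
  next
    case False
    obtain a where a: "inj_on a J" "\<forall>j\<in>J. a j \<in> C j"
      using insert.IH insert.prems by (auto intro: inj_on_subset)
    have "r ` insert x J \<subseteq> {1..r x}"
      using insert.hyps(2) insert.prems(2) by force
    then have "card (r ` insert x J) \<le> r x"
      using card_mono[of "{1..r x}"] by fastforce
    then have "card (insert x J) \<le> r x"
      by (metis card_image insert.prems(1))
    then have "card (a ` J) < card (C x)"
      using card_image_le[OF insert.hyps(1), of a] insert.hyps(1) insert.prems(2) False by simp
    then have "\<not> C x \<subseteq> a ` J"
      using card_mono[of "a ` J" "C x"] insert.hyps(1) by fastforce
    then obtain c where c: "c \<in> C x" "c \<notin> a ` J" by blast
    have "inj_on (a(x := c)) (insert x J)"
      using a(1) c(2) False by (auto simp: inj_on_def)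
    moreover have "\<forall>j\<in>insert x J. (a(x := c)) j \<in> C j"
      using a(2) c(1) by simp
    ultimately show ?thesis by blast
  qed
qed simp

definition cyclic_shift :: "nat \<Rightarrow> nat \<Rightarrow> nat \<Rightarrow> nat" where
  "cyclic_shift h s j = (if j + s \<le> h then j + s else j + s - h)"

lemma cyclic_shift_in_range:
  "s < h \<Longrightarrow> j \<in> {1..h} \<Longrightarrow> cyclic_shift h s j \<in> {1..h}"
  by (auto simp: cyclic_shift_def)

lemma inj_on_cyclic_shift: "s < h \<Longrightarrow> inj_on (cyclic_shift h s) {1..h}"
  by (auto simp: inj_on_def cyclic_shift_def split: if_splits)

lemma bij_betw_cyclic_shift:
  assumes "j \<in> {1..h}"
  shows "bij_betw (\<lambda>s. cyclic_shift h s j) {..<h} {1..h}"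
proof (rule bij_betwI')
  fix k assume "k \<in> {1..h}"
  then show "\<exists>s\<in>{..<h}. k = cyclic_shift h s j"
    using assms by (intro bexI[of _ "if j \<le> k then k - j else k + h - j"]) (auto simp: cyclic_shift_def)
qed (use assms in \<open>auto simp: cyclic_shift_def split: if_splits\<close>)

lemma prod_prod_eq_prod_cyclic_shifts:
  assumes "J \<subseteq> {1..h}"
  shows "(\<Prod>j\<in>J. \<Prod>k\<in>{1..h}. v j k) = (\<Prod>s<h. \<Prod>j\<in>J. v j (cyclic_shift h s j))"
proof -
  have "(\<Prod>s<h. \<Prod>j\<in>J. v j (cyclic_shift h s j)) = (\<Prod>j\<in>J. \<Prod>s<h. v j (cyclic_shift h s j))"
    by (rule prod.swap)
  also have "\<dots> = (\<Prod>j\<in>J. \<Prod>k\<in>{1..h}. v j k)"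
    using assms by (intro prod.cong refl prod.reindex_bij_betw bij_betw_cyclic_shift) auto
  finally show ?thesis by simp
qed

lemma exists_factor_gt_of_power_card_less_prod:
  fixes f :: "'a \<Rightarrow> real"
  assumes "\<forall>s\<in>S. 0 \<le> f s" "0 \<le> \<epsilon>" "\<epsilon> ^ card S < prod f S"
  shows "\<exists>s\<in>S. \<epsilon> < f s"
proof (rule ccontr)
  assume "\<not> ?thesis"
  then have "prod f S \<le> (\<Prod>s\<in>S. \<epsilon>)"
    using assms(1) by (intro prod_mono) auto
  then show False using assms(3) by simp
qed

lemma exists_cyclic_shift_prod_gt:
  fixes w :: "nat \<Rightarrow> nat \<Rightarrow> real"
  assumes "\<forall>j\<in>{1..h}. \<forall>k\<in>{1..h}. 0 \<le> w j k" "0 \<le> \<epsilon>"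
    and "\<epsilon> ^ h < (\<Prod>j\<in>{1..h}. \<Prod>k\<in>{1..h}. w j k)"
  shows "\<exists>s<h. \<epsilon> < (\<Prod>j\<in>{1..h}. w j (cyclic_shift h s j))"
proof -
  have large: "\<epsilon> ^ card {..<h} < (\<Prod>s<h. \<Prod>j\<in>{1..h}. w j (cyclic_shift h s j))"
    using assms(3) prod_prod_eq_prod_cyclic_shifts[of "{1..h}" h w] by simp
  have nonneg: "\<forall>s\<in>{..<h}. 0 \<le> (\<Prod>j\<in>{1..h}. w j (cyclic_shift h s j))"
  proof
    fix s assume "s \<in> {..<h}"
    then show "0 \<le> (\<Prod>j\<in>{1..h}. w j (cyclic_shift h s j))"
      using assms(1) cyclic_shift_in_range[of s h] by (intro prod_nonneg) simp
  qed
  obtain s where "s \<in> {..<h}" "\<epsilon> < (\<Prod>j\<in>{1..h}. w j (cyclic_shift h s j))"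
    using exists_factor_gt_of_power_card_less_prod[OF nonneg assms(2) large] ..
  then show ?thesis by auto
qed

lemma exists_inj_prod_gt_of_antimono_rows:
  fixes t :: "nat \<Rightarrow> nat \<Rightarrow> 'a" and g :: "nat \<Rightarrow> 'a \<Rightarrow> real"
  assumes inj: "\<forall>j\<in>{1..h}. inj_on (t j) {1..h}"
    and antimono: "\<forall>j\<in>{1..h}. \<forall>k\<in>{1..h}. \<forall>k'\<in>{1..h}. k \<le> k' \<longrightarrow> g j (t j k') \<le> g j (t j k)"
    and nonneg: "\<forall>j\<in>{1..h}. \<forall>k\<in>{1..h}. 0 \<le> g j (t j k)"
    and "0 \<le> \<epsilon>" "\<epsilon> ^ h < (\<Prod>j\<in>{1..h}. \<Prod>k\<in>{1..h}. g j (t j k))"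
  shows "\<exists>a. inj_on a {1..h} \<and> (\<forall>j\<in>{1..h}. a j \<in> t j ` {1..h}) \<and> \<epsilon> < (\<Prod>j\<in>{1..h}. g j (a j))"
proof -
  obtain s where "s < h" and s: "\<epsilon> < (\<Prod>j\<in>{1..h}. g j (t j (cyclic_shift h s j)))"
    using exists_cyclic_shift_prod_gt[of h "\<lambda>j k. g j (t j k)"] nonneg assms(4,5) by blast
  define \<sigma> where "\<sigma> = cyclic_shift h s"
  have \<sigma>_in: "\<sigma> j \<in> {1..h}" if "j \<in> {1..h}" for j
    using cyclic_shift_in_range[OF \<open>s < h\<close> that] by (simp add: \<sigma>_def)
  have choices: "\<forall>j\<in>{1..h}. 0 < \<sigma> j \<and> \<sigma> j \<le> card (t j ` {1..\<sigma> j})"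
  proof
    fix j assume j: "j \<in> {1..h}"
    then have "{1..\<sigma> j} \<subseteq> {1..h}" using \<sigma>_in by auto
    with j inj have "inj_on (t j) {1..\<sigma> j}" by (blast intro: inj_on_subset)
    then show "0 < \<sigma> j \<and> \<sigma> j \<le> card (t j ` {1..\<sigma> j})"
      using \<sigma>_in[OF j] by (simp add: card_image)
  qed
  have "inj_on \<sigma> {1..h}"
    using inj_on_cyclic_shift[OF \<open>s < h\<close>] by (simp add: \<sigma>_def)
  then obtain a where a: "inj_on a {1..h}" "\<forall>j\<in>{1..h}. a j \<in> t j ` {1..\<sigma> j}"
    using exists_inj_on_choice[OF finite_atLeastAtMost _ choices] by blast
  have a_ge: "a j \<in> t j ` {1..h} \<and> g j (t j (\<sigma> j)) \<le> g j (a j)" if "j \<in> {1..h}" for j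
  proof -
    have "a j \<in> t j ` {1..\<sigma> j}" using a(2) that ..
    then obtain k where k: "a j = t j k" "k \<in> {1..\<sigma> j}" by (rule imageE)
    moreover have "k \<in> {1..h}" using k(2) \<sigma>_in[OF that] by simp
    ultimately show ?thesis
      using antimono that \<sigma>_in[OF that] by simp
  qed
  have "(\<Prod>j\<in>{1..h}. g j (t j (\<sigma> j))) \<le> (\<Prod>j\<in>{1..h}. g j (a j))"
    using a_ge nonneg \<sigma>_in by (intro prod_mono) simp
  then show ?thesis using a(1) a_ge s by (auto simp: \<sigma>_def)
qed

lemma threshold_bounds:
  fixes \<beta> \<epsilon> :: real
  assumes "0 < \<beta>" "real h * \<beta> < 1" "2 ^ h * \<beta> / (1 - real h * \<beta>) \<le> \<epsilon>" "\<epsilon> < 1"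
  shows "2 ^ h * \<beta> \<le> \<epsilon>" "3 * real h * \<beta> \<le> 1"
proof -
  have "0 < 1 - real h * \<beta>" using assms(2) by simp
  have "2 ^ h * \<beta> * (1 - real h * \<beta>) \<le> 2 ^ h * \<beta>"
    using assms(1) by (intro mult_left_le) auto
  then have "2 ^ h * \<beta> \<le> 2 ^ h * \<beta> / (1 - real h * \<beta>)"
    using \<open>0 < 1 - real h * \<beta>\<close> by (simp add: le_divide_eq)
  then show "2 ^ h * \<beta> \<le> \<epsilon>" using assms(3) by linarith
  have "2 ^ h * \<beta> / (1 - real h * \<beta>) < 1" using assms(3,4) by linarith
  then have "2 ^ h * \<beta> < 1 - real h * \<beta>"
    using pos_divide_less_eq[OF \<open>0 < 1 - real h * \<beta>\<close>] by simp
  moreover have "real (2 * h) \<le> 2 ^ h"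
    using double_le_power_two[of h] by (metis of_nat_le_iff of_nat_numeral of_nat_power)
  then have "2 * real h * \<beta> \<le> 2 ^ h * \<beta>"
    using assms(1) by (intro mult_right_mono) auto
  ultimately show "3 * real h * \<beta> \<le> 1" by linarith
qed

lemma prod_le_factor:
  fixes e :: "'a \<Rightarrow> real"
  assumes "finite J" "j \<in> J" "\<forall>i\<in>J. 0 \<le> e i \<and> e i \<le> 1"
  shows "prod e J \<le> e j"
proof -
  have "prod e J = e j * prod e (J - {j})"
    using assms(1,2) by (rule prod.remove)
  also have "\<dots> \<le> e j * 1"
    using assms by (intro mult_left_mono prod_le_1) auto
  finally show ?thesis by simp
qed

lemma sum_weighted_in_unit_interval:
  fixes p f :: "'a \<Rightarrow> real"
  assumes "\<forall>a\<in>A. 0 \<le> p a" "sum p A = 1" "\<forall>a\<in>A. 0 \<le> f a \<and> f a \<le> 1"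
  shows "0 \<le> (\<Sum>a\<in>A. p a * f a) \<and> (\<Sum>a\<in>A. p a * f a) \<le> 1"
proof
  show "0 \<le> (\<Sum>a\<in>A. p a * f a)" using assms by (intro sum_nonneg mult_nonneg_nonneg) auto
  have "(\<Sum>a\<in>A. p a * f a) \<le> sum p A" using assms by (intro sum_mono mult_left_le) auto
  then show "(\<Sum>a\<in>A. p a * f a) \<le> 1" using assms(2) by simp
qed

lemma le_card_of_bounded_weights:
  fixes p :: "'a \<Rightarrow> real"
  assumes "\<forall>a\<in>A. p a \<le> \<beta>" "sum p A = 1" "real h * \<beta> < 1"
  shows "h \<le> card A"
proof -
  have "1 \<le> real (card A) * \<beta>"
    using sum_bounded_above[of A p \<beta>] assms(1,2) by simp
  moreover have "0 < \<beta>"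
  proof (rule ccontr)
    assume "\<not> 0 < \<beta>"
    then have "real (card A) * \<beta> \<le> 0" by (simp add: mult_nonneg_nonpos)
    then show False using \<open>1 \<le> real (card A) * \<beta>\<close> by linarith
  qed
  moreover have "real h * \<beta> < real (card A) * \<beta>"
    using \<open>1 \<le> real (card A) * \<beta>\<close> assms(3) by linarith
  ultimately show ?thesis using mult_right_less_imp_less by fastforce
qed

lemma exists_distinct_points_prod_gt_of_means_gt:
  fixes p :: "'a \<Rightarrow> real" and f :: "nat \<Rightarrow> 'a \<Rightarrow> real"
  assumes A: "finite A" "h \<le> card A" "1 \<le> h"
    and \<beta>: "0 < \<beta>" "3 * real h * \<beta> \<le> 1"
    and p: "\<forall>a\<in>A. 0 \<le> p a \<and> p a \<le> \<beta>" "sum p A = 1"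
    and f: "\<forall>j\<in>{1..h}. \<forall>a\<in>A. 0 \<le> f j a \<and> f j a \<le> 1"
    and means: "\<forall>j\<in>{1..h}. 2 ^ h * \<beta> < (\<Sum>a\<in>A. p a * f j a)"
    and \<epsilon>: "0 \<le> \<epsilon>" "\<epsilon> ^ h < (\<Prod>j\<in>{1..h}. (\<Sum>a\<in>A. p a * f j a) ^ h)"
  shows "\<exists>a. (\<forall>j\<in>{1..h}. a j \<in> A) \<and> inj_on a {1..h} \<and> \<epsilon> < (\<Prod>j\<in>{1..h}. f j (a j))"
proof -
  have "\<forall>j\<in>{1..h}. \<exists>t. t ` {1..h} \<subseteq> A \<and> inj_on t {1..h}
           \<and> (\<forall>k\<in>{1..h}. \<forall>k'\<in>{1..h}. k \<le> k' \<longrightarrow> f j (t k') \<le> f j (t k))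
           \<and> (\<Sum>a\<in>A. p a * f j a) ^ h \<le> (\<Prod>k\<in>{1..h}. f j (t k))"
    using exists_top_elements_power_le_prod[OF A \<beta> p] f means by simp
  then obtain t where t: "\<forall>j\<in>{1..h}. t j ` {1..h} \<subseteq> A \<and> inj_on (t j) {1..h}
           \<and> (\<forall>k\<in>{1..h}. \<forall>k'\<in>{1..h}. k \<le> k' \<longrightarrow> f j (t j k') \<le> f j (t j k))
           \<and> (\<Sum>a\<in>A. p a * f j a) ^ h \<le> (\<Prod>k\<in>{1..h}. f j (t j k))"
    by (rule bchoice[elim_format]) blast
  have t_A: "\<forall>j\<in>{1..h}. t j ` {1..h} \<subseteq> A"
    and t_inj: "\<forall>j\<in>{1..h}. inj_on (t j) {1..h}"
    and t_antimono: "\<forall>j\<in>{1..h}. \<forall>k\<in>{1..h}. \<forall>k'\<in>{1..h}. k \<le> k' \<longrightarrow> f j (t j k') \<le> f j (t j k)"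
    and t_rows: "\<forall>j\<in>{1..h}. (\<Sum>a\<in>A. p a * f j a) ^ h \<le> (\<Prod>k\<in>{1..h}. f j (t j k))"
    using t by blast+
  have t_nonneg: "\<forall>j\<in>{1..h}. \<forall>k\<in>{1..h}. 0 \<le> f j (t j k)"
    using t_A f by blast
  have "0 < 2 ^ h * \<beta>" using \<beta>(1) by simp
  then have means_nonneg: "0 \<le> (\<Sum>a\<in>A. p a * f j a)" if "j \<in> {1..h}" for j
    using bspec[OF means that] by linarith
  have "(\<Prod>j\<in>{1..h}. (\<Sum>a\<in>A. p a * f j a) ^ h) \<le> (\<Prod>j\<in>{1..h}. \<Prod>k\<in>{1..h}. f j (t j k))"
    using t_rows means_nonneg by (intro prod_mono) simp
  then have "\<epsilon> ^ h < (\<Prod>j\<in>{1..h}. \<Prod>k\<in>{1..h}. f j (t j k))"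
    using \<epsilon>(2) by linarith
  then obtain a where "inj_on a {1..h}" and a_rows: "\<forall>j\<in>{1..h}. a j \<in> t j ` {1..h}"
    and "\<epsilon> < (\<Prod>j\<in>{1..h}. f j (a j))"
    using exists_inj_prod_gt_of_antimono_rows[OF t_inj t_antimono t_nonneg \<epsilon>(1)] by blast
  moreover have "\<forall>j\<in>{1..h}. a j \<in> A"
  proof
    fix j assume "j \<in> {1..h}"
    then show "a j \<in> A" using a_rows t_A by blast
  qed
  ultimately show ?thesis by blast
qed

lemma exists_distinct_points_prod_gt:
  fixes p :: "'a \<Rightarrow> real" and f :: "nat \<Rightarrow> 'a \<Rightarrow> real"
  assumes A: "finite A" "1 \<le> h"
    and \<beta>: "0 < \<beta>" "real h * \<beta> < 1" "2 ^ h * \<beta> / (1 - real h * \<beta>) \<le> \<epsilon>"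
    and p: "\<forall>a\<in>A. 0 \<le> p a \<and> p a \<le> \<beta>" "sum p A = 1"
    and f: "\<forall>j\<in>{1..h}. \<forall>a\<in>A. 0 \<le> f j a \<and> f j a \<le> 1"
    and large: "\<epsilon> < (\<Prod>j\<in>{1..h}. \<Sum>a\<in>A. p a * f j a)"
  shows "\<exists>a. (\<forall>j\<in>{1..h}. a j \<in> A) \<and> inj_on a {1..h} \<and> \<epsilon> < (\<Prod>j\<in>{1..h}. f j (a j))"
proof -
  define e where "e j = (\<Sum>a\<in>A. p a * f j a)" for j
  define P where "P = (\<Prod>j\<in>{1..h}. e j)"
  have e01: "\<forall>j\<in>{1..h}. 0 \<le> e j \<and> e j \<le> 1"
  proof
    fix j assume "j \<in> {1..h}"
    then show "0 \<le> e j \<and> e j \<le> 1"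
      unfolding e_def using p f by (intro sum_weighted_in_unit_interval) auto
  qed
  have "\<epsilon> < P" using large by (simp add: P_def e_def)
  moreover have "P \<le> 1" unfolding P_def using e01 by (intro prod_le_1) auto
  ultimately have "2 ^ h * \<beta> \<le> \<epsilon>" "3 * real h * \<beta> \<le> 1"
    using threshold_bounds[OF \<beta>] by auto
  have "\<forall>a\<in>A. p a \<le> \<beta>" using p(1) by blast
  then have "h \<le> card A" using le_card_of_bounded_weights p(2) \<beta>(2) by blast
  have "0 < 2 ^ h * \<beta>" using \<beta>(1) by simp
  then have "0 \<le> \<epsilon>" using \<open>2 ^ h * \<beta> \<le> \<epsilon>\<close> by linarith
  have "\<forall>j\<in>{1..h}. 2 ^ h * \<beta> < e j"
    using prod_le_factor[of "{1..h}" _ e] e01 \<open>\<epsilon> < P\<close> \<open>2 ^ h * \<beta> \<le> \<epsilon>\<close>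
    by (fastforce simp: P_def)
  moreover have "\<epsilon> ^ h < (\<Prod>j\<in>{1..h}. e j ^ h)"
    using \<open>\<epsilon> < P\<close> \<open>0 \<le> \<epsilon>\<close> A(2) by (simp add: P_def power_strict_mono flip: prod_power_distrib)
  ultimately show ?thesis
    using exists_distinct_points_prod_gt_of_means_gt[OF A(1) \<open>h \<le> card A\<close> A(2) \<beta>(1)
        \<open>3 * real h * \<beta> \<le> 1\<close> p f _ \<open>0 \<le> \<epsilon>\<close>]
    by (simp add: e_def)
qed

section \<open>Product measures on the cube\<close>

lemma mem_cube_iff:
  "x \<in> cube n m \<longleftrightarrow> (\<forall>i\<in>{1..n}. x i \<in> {1..m}) \<and> (\<forall>i. i \<notin> {1..n} \<longrightarrow> x i = undefined)"
  unfolding cube_def by (auto simp: PiE_iff extensional_def)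

lemma finite_cube: "finite (cube n m)"
  unfolding cube_def by (intro finite_PiE) auto

lemma cube_0: "cube 0 m = {\<lambda>_. undefined}"
  unfolding cube_def by simp

lemma fun_upd_in_cube_Suc: "g \<in> cube n m \<Longrightarrow> a \<in> {1..m} \<Longrightarrow> g(Suc n := a) \<in> cube (Suc n) m"
  unfolding mem_cube_iff by auto

lemma inj_on_fun_upd_cube: "inj_on (\<lambda>g. g(Suc n := a)) (cube n m)"
proof (rule inj_onI)
  have restore: "g = (g(Suc n := a))(Suc n := undefined)" if "g \<in> cube n m" for g
    using that unfolding mem_cube_iff by (simp add: fun_eq_iff)
  fix g g' assume "g \<in> cube n m" "g' \<in> cube n m" "g(Suc n := a) = g'(Suc n := a)"
  then show "g = g'" using restore by metis
qed

definition slice :: "nat \<Rightarrow> nat \<Rightarrow> (nat \<Rightarrow> nat) set \<Rightarrow> nat \<Rightarrow> (nat \<Rightarrow> nat) set" where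
  "slice n m F a = {g \<in> cube n m. g(Suc n := a) \<in> F}"

lemma slice_subset_cube: "slice n m F a \<subseteq> cube n m"
  by (auto simp: slice_def)

lemma fibre_eq_image_slice:
  assumes "F \<subseteq> cube (Suc n) m"
  shows "{x \<in> F. x (Suc n) = a} = (\<lambda>g. g(Suc n := a)) ` slice n m F a"
proof
  show "{x \<in> F. x (Suc n) = a} \<subseteq> (\<lambda>g. g(Suc n := a)) ` slice n m F a"
  proof
    fix x assume x: "x \<in> {x \<in> F. x (Suc n) = a}"
    then have "x \<in> cube (Suc n) m" using assms by blast
    then have "x(Suc n := undefined) \<in> cube n m"
      unfolding mem_cube_iff by auto
    then have "x(Suc n := undefined) \<in> slice n m F a"
      using x by (auto simp: slice_def)
    moreover have "x = (x(Suc n := undefined))(Suc n := a)" using x by auto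
    ultimately show "x \<in> (\<lambda>g. g(Suc n := a)) ` slice n m F a"
      unfolding image_iff by blast
  qed
qed (auto simp: slice_def)

lemma prod_measure_Suc:
  assumes "F \<subseteq> cube (Suc n) m"
  shows "prod_measure (Suc n) \<nu> F = (\<Sum>a\<in>{1..m}. \<nu> (Suc n) a * prod_measure n \<nu> (slice n m F a))"
proof -
  let ?w = "\<lambda>x. \<Prod>i\<in>{1..Suc n}. \<nu> i (x i)"
  have "finite F" using assms finite_cube finite_subset by blast
  moreover have "x (Suc n) \<in> {1..m}" if "x \<in> F" for x
  proof -
    have "x \<in> cube (Suc n) m" using assms that by blast
    then show ?thesis unfolding mem_cube_iff by simp
  qed
  ultimately have "prod_measure (Suc n) \<nu> F = (\<Sum>a\<in>{1..m}. \<Sum>x\<in>{x \<in> F. x (Suc n) = a}. ?w x)"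
    unfolding prod_measure_def by (intro sum.group[symmetric]) auto
  also have "\<dots> = (\<Sum>a\<in>{1..m}. \<Sum>g\<in>slice n m F a. ?w (g(Suc n := a)))"
    using inj_on_subset[OF inj_on_fun_upd_cube slice_subset_cube]
    by (simp add: fibre_eq_image_slice[OF assms] sum.reindex)
  also have "\<dots> = (\<Sum>a\<in>{1..m}. \<nu> (Suc n) a * prod_measure n \<nu> (slice n m F a))"
  proof (intro sum.cong refl)
    fix a
    have "?w (g(Suc n := a)) = \<nu> (Suc n) a * (\<Prod>i\<in>{1..n}. \<nu> i (g i))" for g
      by (simp add: atLeastAtMostSuc_conv)
    then show "(\<Sum>g\<in>slice n m F a. ?w (g(Suc n := a))) = \<nu> (Suc n) a * prod_measure n \<nu> (slice n m F a)"
      by (simp add: prod_measure_def sum_distrib_left mult.commute)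
  qed
  finally show ?thesis .
qed

lemma product_prob_SucD: "product_prob (Suc n) m \<nu> \<Longrightarrow> product_prob n m \<nu>"
  unfolding product_prob_def by auto

lemma balanced_SucD: "balanced (Suc n) m \<nu> b \<Longrightarrow> balanced n m \<nu> b"
  unfolding balanced_def by auto

lemma prod_measure_cube: "product_prob n m \<nu> \<Longrightarrow> prod_measure n \<nu> (cube n m) = 1"
proof (induction n)
  case 0
  then show ?case by (simp add: cube_0 prod_measure_def)
next
  case (Suc n)
  have "slice n m (cube (Suc n) m) a = cube n m" if "a \<in> {1..m}" for a
    using fun_upd_in_cube_Suc[OF _ that] by (auto simp: slice_def)
  then have "prod_measure (Suc n) \<nu> (cube (Suc n) m) = (\<Sum>a\<in>{1..m}. \<nu> (Suc n) a)"
    using Suc product_prob_SucD prod_measure_Suc[of "cube (Suc n) m" n m \<nu>] by simp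
  then show ?case using Suc.prems unfolding product_prob_def by simp
qed

lemma prod_marginals_nonneg:
  "product_prob n m \<nu> \<Longrightarrow> x \<in> cube n m \<Longrightarrow> 0 \<le> (\<Prod>i\<in>{1..n}. \<nu> i (x i))"
  unfolding product_prob_def mem_cube_iff by (intro prod_nonneg) auto

lemma prod_measure_bounds:
  assumes "product_prob n m \<nu>" "F \<subseteq> cube n m"
  shows "0 \<le> prod_measure n \<nu> F" "prod_measure n \<nu> F \<le> 1"
proof -
  show "0 \<le> prod_measure n \<nu> F"
    unfolding prod_measure_def using assms prod_marginals_nonneg by (intro sum_nonneg) blast
  have "prod_measure n \<nu> F \<le> prod_measure n \<nu> (cube n m)"
    unfolding prod_measure_def using assms prod_marginals_nonneg
    by (intro sum_mono2 finite_cube) auto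
  then show "prod_measure n \<nu> F \<le> 1" using prod_measure_cube[OF assms(1)] by simp
qed

definition cross_matching :: "nat \<Rightarrow> nat \<Rightarrow> (nat \<Rightarrow> (nat \<Rightarrow> nat) set) \<Rightarrow> (nat \<Rightarrow> nat \<Rightarrow> nat) \<Rightarrow> bool" where
  "cross_matching n h F x \<longleftrightarrow> (\<forall>j\<in>{1..h}. x j \<in> F j) \<and>
     (\<forall>j\<in>{1..h}. \<forall>j'\<in>{1..h}. j \<noteq> j' \<longrightarrow> \<not> (\<exists>i\<in>{1..n}. x j i = x j' i))"

lemma cross_matching_cube_0:
  assumes "\<forall>j\<in>{1..h}. F j \<subseteq> cube 0 m" "0 < (\<Prod>j\<in>{1..h}. prod_measure 0 \<nu> (F j))"
  shows "cross_matching 0 h F (\<lambda>_ _. undefined)"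
proof -
  have "F j \<noteq> {}" if "j \<in> {1..h}" for j
  proof
    assume "F j = {}"
    then have "(\<Prod>j\<in>{1..h}. prod_measure 0 \<nu> (F j)) = 0"
      using that by (intro prod_zero bexI[of _ j]) (auto simp: prod_measure_def)
    then show False using assms(2) by linarith
  qed
  then have "(\<lambda>_. undefined) \<in> F j" if "j \<in> {1..h}" for j
    using assms(1) that cube_0 by fastforce
  then show ?thesis by (simp add: cross_matching_def)
qed

lemma cross_matching_fun_upd_Suc:
  assumes "cross_matching n h (\<lambda>j. slice n m (F j) (a j)) x" "inj_on a {1..h}"
  shows "cross_matching (Suc n) h F (\<lambda>j. (x j)(Suc n := a j))"
  unfolding cross_matching_def
proof (intro conjI ballI impI notI)
  fix j assume "j \<in> {1..h}"
  then show "(x j)(Suc n := a j) \<in> F j"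
    using assms(1) by (auto simp: cross_matching_def slice_def)
next
  fix j j' assume j: "j \<in> {1..h}" "j' \<in> {1..h}" "j \<noteq> j'"
    and "\<exists>i\<in>{1..Suc n}. ((x j)(Suc n := a j)) i = ((x j')(Suc n := a j')) i"
  then obtain i where i: "i \<in> {1..Suc n}" "((x j)(Suc n := a j)) i = ((x j')(Suc n := a j')) i"
    by blast
  show False
  proof (cases "i = Suc n")
    case True
    then have "a j = a j'" using i(2) by simp
    then show False using j assms(2) by (simp add: inj_on_eq_iff)
  next
    case False
    then have "i \<in> {1..n}" "x j i = x j' i" using i by auto
    then show False using j assms(1) unfolding cross_matching_def by blast
  qed
qed

lemma exists_cross_matching:
  fixes h m :: nat and b :: real
  assumes "1 \<le> h" "0 < b" "real h * b < real m"
  shows "product_prob n m \<nu> \<Longrightarrow> balanced n m \<nu> b \<Longrightarrow> \<forall>j\<in>{1..h}. F j \<subseteq> cube n m \<Longrightarrow>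
    2 ^ h * b / (real m - real h * b) < (\<Prod>j\<in>{1..h}. prod_measure n \<nu> (F j)) \<Longrightarrow>
    \<exists>x. cross_matching n h F x"
proof (induction n arbitrary: F)
  case 0
  have "0 < 2 ^ h * b / (real m - real h * b)" using assms by simp
  then have "0 < (\<Prod>j\<in>{1..h}. prod_measure 0 \<nu> (F j))" using "0.prems"(4) by linarith
  then show ?case using cross_matching_cube_0 "0.prems"(3) by blast
next
  case (Suc n)
  define \<beta> where "\<beta> = b / real m"
  define \<epsilon> where "\<epsilon> = 2 ^ h * b / (real m - real h * b)"
  define f where "f j a = prod_measure n \<nu> (slice n m (F j) a)" for j a
  have "0 \<le> real h * b" using assms(2) by simp
  then have "0 < real m" using assms(3) by linarith
  then have \<beta>: "0 < \<beta>" "real h * \<beta> < 1" "2 ^ h * \<beta> / (1 - real h * \<beta>) \<le> \<epsilon>"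
    using assms(2,3) by (simp_all add: \<beta>_def \<epsilon>_def field_simps)
  have \<nu>: "\<forall>a\<in>{1..m}. 0 \<le> \<nu> (Suc n) a \<and> \<nu> (Suc n) a \<le> \<beta>" "sum (\<nu> (Suc n)) {1..m} = 1"
    using Suc.prems(1,2) unfolding product_prob_def balanced_def \<beta>_def by auto
  have "\<forall>j\<in>{1..h}. \<forall>a\<in>{1..m}. 0 \<le> f j a \<and> f j a \<le> 1"
    using prod_measure_bounds[OF product_prob_SucD[OF Suc.prems(1)] slice_subset_cube]
    by (simp add: f_def)
  moreover have "(\<Prod>j\<in>{1..h}. prod_measure (Suc n) \<nu> (F j))
      = (\<Prod>j\<in>{1..h}. \<Sum>a\<in>{1..m}. \<nu> (Suc n) a * f j a)"
  proof (rule prod.cong[OF refl])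
    fix j assume "j \<in> {1..h}"
    then have "F j \<subseteq> cube (Suc n) m" using Suc.prems(3) by blast
    then show "prod_measure (Suc n) \<nu> (F j) = (\<Sum>a\<in>{1..m}. \<nu> (Suc n) a * f j a)"
      by (simp add: f_def prod_measure_Suc)
  qed
  then have "\<epsilon> < (\<Prod>j\<in>{1..h}. \<Sum>a\<in>{1..m}. \<nu> (Suc n) a * f j a)"
    using Suc.prems(4) by (simp add: \<epsilon>_def)
  ultimately obtain a where a: "inj_on a {1..h}" "\<epsilon> < (\<Prod>j\<in>{1..h}. f j (a j))"
    using exists_distinct_points_prod_gt[OF finite_atLeastAtMost assms(1) \<beta> \<nu>] by blast
  have "\<exists>x. cross_matching n h (\<lambda>j. slice n m (F j) (a j)) x"
    using a(2) slice_subset_cube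
    by (intro Suc.IH product_prob_SucD[OF Suc.prems(1)] balanced_SucD[OF Suc.prems(2)])
      (auto simp: \<epsilon>_def f_def)
  then show ?case using cross_matching_fun_upd_Suc a(1) by blast
qed

theorem lemma8p3:
  fixes h n m :: nat and b :: real
    and nu :: "nat \<Rightarrow> nat \<Rightarrow> real"
    and F :: "nat \<Rightarrow> (nat \<Rightarrow> nat) set"
  assumes "b > 0"
    and "real m > real h * b"
    and "product_prob n m nu"
    and "balanced n m nu b"
    and "\<forall>j\<in>{1..h}. F j \<subseteq> cube n m"
    and "(\<Prod>j\<in>{1..h}. prod_measure n nu (F j)) > 2 ^ h * b / (real m - real h * b)"
  shows "\<exists>x :: nat \<Rightarrow> nat \<Rightarrow> nat.
           (\<forall>j\<in>{1..h}. x j \<in> F j) \<and>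
           (\<forall>j\<in>{1..h}. \<forall>j'\<in>{1..h}. j \<noteq> j' \<longrightarrow>
              \<not> (\<exists>i\<in>{1..n}. x j i = x j' i))"
proof (cases "h = 0")
  case False
  then have "\<exists>x. cross_matching n h F x"
    using exists_cross_matching[of h b m n nu F] assms by simp
  then show ?thesis unfolding cross_matching_def .
qed simp

end
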